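(* Let $S=\operatorname{FInv}\langle X\mid R\rangle$ with $R$ a symmetric relation on $\mathbb{I}\mathfrak{m}_X$, and let $\Gamma_X$ be the Cayley graph of its greatest group image $G$. Then for every term $w\in\mathbb{I}\mathfrak{m}_X$, the $F$-Schützenberger graph $F\Gamma(w)$ equals $\langle\overline w\rangle^{c_R}$, the smallest $c_R$-closed subgraph of $\Gamma_X$ containing $\langle\overline w\rangle$. Furthermore $F\Gamma(w)=\bigcup_{i\ge0}\Delta_i$, where $\Delta_0=\langle\overline w\rangle$ and $\Delta_{i+1}$ is the full $P$-expansion of $\Delta_i$ with respect to $R$.
   Context: $\operatorname{FInv}\langle X\mid R\rangle$ is the quotient of the free $F$-inverse monoid on $X$ (signature $(\cdot,1,{}^{-1},{}^{\mathfrak m})$, $s^{\mathfrak m}$ the greatest element of the $\sigma$-class of $s$) by the congruence generated by $R$. $\mathbb{I}\mathfrak{m}_X$ is the set of terms $u_0v_1^{\mathfrak m}u_1\cdots v_n^{\mathfrak m}u_n$ ($u_i,v_i\in(X\cup X^{-1})^*$). $\Gamma_X$: vertices $G$, edge labeled $x$ from $g$ to $gx_G$ ($x\in X\cup X^{-1}$) with inverse edges; subgraphs closed under endpoints and inverses. The journey labeled $w$ from $g$ is $g\overline w=(g\overline{u_0},g(u_0v_1)_G\overline{u_1},\dots,g(u_0v_1\cdots u_{n-1}v_n)_G\overline{u_n})$, $h\overline u$ the path from $h$ labeled by word $u$, $\overline w=1\overline w$; $\langle g\overline w\rangle$ is the union of the subgraphs spanned by its paths; $w$ labels a journey in $\Delta$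 from $g$ to $h$ if $gw_G=h$ and $\langle g\overline w\rangle\subseteq\Delta$. For a symmetric relation $Q$ on $\mathbb{I}\mathfrak{m}_X$ with pairs equal in $G$, a subgraph $\Delta$ is $c_Q$-closed if for all $(u,v)\in Q$ and $g,h\in V(\Delta)$, $u$ labels a journey in $\Delta$ from $g$ to $h$ iff $v$ does, and $\Delta^{c_Q}$ is the intersection of the $c_Q$-closed subgraphs containing $\Delta$. $c_S=c_Q$ for $Q=\{(u,v):u_S=v_S\}$, and $F\Gamma(w)=\langle\overline w\rangle^{c_S}$. The full $P$-expansion of $\Delta$ with respect to $R$ is $\Delta\cup\bigcup\langle g\overline v\rangle$ over all $(u,v)\in R$, $g\in V(\Delta)$ with $\langle g\overline u\rangle\subseteq\Delta$. *)

theory Defs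
  imports Main
begin

text \<open>The alphabet X is the type 'x.  A letter of X \<union> X^{-1} is (x, False) for x and
  (x, True) for x^{-1}.\<close>
type_synonym 'x letter = "'x \<times> bool"
type_synonym 'x word = "'x letter list"

definition inv_letter :: "'x letter \<Rightarrow> 'x letter" where
  "inv_letter a = (fst a, \<not> snd a)"

text \<open>A term u0 v1^m u1 ... vn^m un of Im_X is represented as (u0, [(v1,u1),...,(vn,un)]).\<close>
type_synonym 'x imterm = "'x word \<times> ('x word \<times> 'x word) list"

datatype 'x tm = Var 'x | One | Mul "'x tm" "'x tm" | Inv "'x tm" | Mx "'x tm"

definition letter_tm :: "'x letter \<Rightarrow> 'x tm" where
  "letter_tm a = (if snd a then Inv (Var (fst a)) else Var (fst a))"

fun word_tm :: "'x word \<Rightarrow> 'x tm" where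
  "word_tm [] = One"
| "word_tm (a # u) = Mul (letter_tm a) (word_tm u)"

definition imterm_tm :: "'x imterm \<Rightarrow> 'x tm" where
  "imterm_tm w = foldl (\<lambda>acc (v, u). Mul (Mul acc (Mx (word_tm v))) (word_tm u))
                       (word_tm (fst w)) (snd w)"

definition inverse_monoid ::
  "'a set \<Rightarrow> ('a \<Rightarrow> 'a \<Rightarrow> 'a) \<Rightarrow> 'a \<Rightarrow> ('a \<Rightarrow> 'a) \<Rightarrow> bool" where
  "inverse_monoid C mul one iv \<longleftrightarrow>
     one \<in> C \<and> (\<forall>x\<in>C. \<forall>y\<in>C. mul x y \<in> C) \<and>
     (\<forall>x\<in>C. \<forall>y\<in>C. \<forall>z\<in>C. mul (mul x y) z = mul x (mul y z)) \<and>
     (\<forall>x\<in>C. mul one x = x \<and> mul x one = x) \<and>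
     (\<forall>x\<in>C. iv x \<in> C \<and> mul (mul x (iv x)) x = x \<and> mul (mul (iv x) x) (iv x) = iv x \<and>
        (\<forall>y\<in>C. mul (mul x y) x = x \<and> mul (mul y x) y = y \<longrightarrow> y = iv x))"

definition sigma_rel :: "'a set \<Rightarrow> ('a \<Rightarrow> 'a \<Rightarrow> 'a) \<Rightarrow> 'a \<Rightarrow> 'a \<Rightarrow> bool" where
  "sigma_rel C mul s t \<longleftrightarrow> (\<exists>e\<in>C. mul e e = e \<and> mul e s = mul e t)"

definition nat_le :: "'a set \<Rightarrow> ('a \<Rightarrow> 'a \<Rightarrow> 'a) \<Rightarrow> 'a \<Rightarrow> 'a \<Rightarrow> bool" where
  "nat_le C mul s t \<longleftrightarrow> (\<exists>e\<in>C. mul e e = e \<and> s = mul e t)"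

definition F_inverse_monoid ::
  "'a set \<Rightarrow> ('a \<Rightarrow> 'a \<Rightarrow> 'a) \<Rightarrow> 'a \<Rightarrow> ('a \<Rightarrow> 'a) \<Rightarrow> ('a \<Rightarrow> 'a) \<Rightarrow> bool" where
  "F_inverse_monoid C mul one iv mx \<longleftrightarrow> inverse_monoid C mul one iv \<and>
     (\<forall>s\<in>C. mx s \<in> C \<and> sigma_rel C mul s (mx s) \<and>
        (\<forall>t\<in>C. sigma_rel C mul s t \<longrightarrow> nat_le C mul t (mx s)))"

primrec eval_tm ::
  "('a \<Rightarrow> 'a \<Rightarrow> 'a) \<Rightarrow> 'a \<Rightarrow> ('a \<Rightarrow> 'a) \<Rightarrow> ('a \<Rightarrow> 'a) \<Rightarrow> ('x \<Rightarrow> 'a) \<Rightarrow> 'x tm \<Rightarrow> 'a" where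
  "eval_tm mul one iv mx \<phi> (Var x) = \<phi> x"
| "eval_tm mul one iv mx \<phi> One = one"
| "eval_tm mul one iv mx \<phi> (Mul s t) = mul (eval_tm mul one iv mx \<phi> s) (eval_tm mul one iv mx \<phi> t)"
| "eval_tm mul one iv mx \<phi> (Inv s) = iv (eval_tm mul one iv mx \<phi> s)"
| "eval_tm mul one iv mx \<phi> (Mx s) = mx (eval_tm mul one iv mx \<phi> s)"

text \<open>Equality in S = FInv<X|R>: two terms are equal in the quotient of the free F-inverse
  monoid by the congruence generated by R iff they agree in every F-inverse monoid under every
  assignment satisfying R.  Since S itself is a model whose carrier injects into the type of
  terms, it suffices to quantify over models carried by sets of terms.\<close>
definition S_eq :: "('x imterm \<times> 'x imterm) set \<Rightarrow> 'x tm \<Rightarrow> 'x tm \<Rightarrow> bool" where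
  "S_eq R t1 t2 \<longleftrightarrow>
     (\<forall>(C :: 'x tm set) mul one iv mx \<phi>.
        F_inverse_monoid C mul one iv mx \<and> range \<phi> \<subseteq> C \<and>
        (\<forall>(u, v)\<in>R. eval_tm mul one iv mx \<phi> (imterm_tm u) = eval_tm mul one iv mx \<phi> (imterm_tm v))
        \<longrightarrow> eval_tm mul one iv mx \<phi> t1 = eval_tm mul one iv mx \<phi> t2)"

definition G_eq :: "('x imterm \<times> 'x imterm) set \<Rightarrow> 'x tm \<Rightarrow> 'x tm \<Rightarrow> bool" where
  "G_eq R t1 t2 \<longleftrightarrow> (\<exists>e. S_eq R (Mul e e) e \<and> S_eq R (Mul e t1) (Mul e t2))"

type_synonym 'x vert = "'x tm set"
type_synonym 'x edge = "'x vert \<times> 'x letter \<times> 'x vert"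
type_synonym 'x graph = "'x vert set \<times> 'x edge set"

definition Gcls :: "('x imterm \<times> 'x imterm) set \<Rightarrow> 'x tm \<Rightarrow> 'x vert" where
  "Gcls R t = {t'. G_eq R t t'}"

definition Gverts :: "('x imterm \<times> 'x imterm) set \<Rightarrow> 'x vert set" where
  "Gverts R = range (Gcls R)"

definition Gone :: "('x imterm \<times> 'x imterm) set \<Rightarrow> 'x vert" where
  "Gone R = Gcls R One"

definition gmul :: "('x imterm \<times> 'x imterm) set \<Rightarrow> 'x vert \<Rightarrow> 'x tm \<Rightarrow> 'x vert" where
  "gmul R g t = {t'. \<exists>r\<in>g. G_eq R (Mul r t) t'}"

definition Gedges :: "('x imterm \<times> 'x imterm) set \<Rightarrow> 'x edge set" where
  "Gedges R = {(g, a, gmul R g (letter_tm a)) | g a. g \<in> Gverts R}"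

definition subgraph :: "('x imterm \<times> 'x imterm) set \<Rightarrow> 'x graph \<Rightarrow> bool" where
  "subgraph R D \<longleftrightarrow> fst D \<subseteq> Gverts R \<and> snd D \<subseteq> Gedges R \<and>
     (\<forall>(g, a, h)\<in>snd D. g \<in> fst D \<and> h \<in> fst D \<and> (h, inv_letter a, g) \<in> snd D)"

definition sub_le :: "'x graph \<Rightarrow> 'x graph \<Rightarrow> bool" where
  "sub_le D1 D2 \<longleftrightarrow> fst D1 \<subseteq> fst D2 \<and> snd D1 \<subseteq> snd D2"

fun path_sub :: "('x imterm \<times> 'x imterm) set \<Rightarrow> 'x vert \<Rightarrow> 'x word \<Rightarrow> 'x graph" where
  "path_sub R h [] = ({h}, {})"
| "path_sub R h (a # u) =
     (insert h (fst (path_sub R (gmul R h (letter_tm a)) u)),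
      {(h, a, gmul R h (letter_tm a)), (gmul R h (letter_tm a), inv_letter a, h)}
        \<union> snd (path_sub R (gmul R h (letter_tm a)) u))"

fun jaux :: "('x imterm \<times> 'x imterm) set \<Rightarrow> 'x vert \<Rightarrow> 'x word \<Rightarrow> ('x word \<times> 'x word) list
             \<Rightarrow> ('x vert \<times> 'x word) list" where
  "jaux R g pre [] = []"
| "jaux R g pre ((v, u) # r) = (gmul R g (word_tm (pre @ v)), u) # jaux R g (pre @ v @ u) r"

text \<open>The paths of the journey g w: (starting vertex, label) pairs
  (g, u0), (g (u0 v1)_G, u1), ..., (g (u0 v1 ... u_{n-1} vn)_G, un).\<close>
definition jstarts :: "('x imterm \<times> 'x imterm) set \<Rightarrow> 'x vert \<Rightarrow> 'x imterm \<Rightarrow> ('x vert \<times> 'x word) list" where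
  "jstarts R g w = (g, fst w) # jaux R g (fst w) (snd w)"

definition jsub :: "('x imterm \<times> 'x imterm) set \<Rightarrow> 'x vert \<Rightarrow> 'x imterm \<Rightarrow> 'x graph" where
  "jsub R g w = ((\<Union>(h, u)\<in>set (jstarts R g w). fst (path_sub R h u)),
                 (\<Union>(h, u)\<in>set (jstarts R g w). snd (path_sub R h u)))"

definition labels_journey ::
  "('x imterm \<times> 'x imterm) set \<Rightarrow> 'x imterm \<Rightarrow> 'x graph \<Rightarrow> 'x vert \<Rightarrow> 'x vert \<Rightarrow> bool" where
  "labels_journey R w D g h \<longleftrightarrow> gmul R g (imterm_tm w) = h \<and> sub_le (jsub R g w) D"

definition cQ_closed ::
  "('x imterm \<times> 'x imterm) set \<Rightarrow> ('x imterm \<times> 'x imterm) set \<Rightarrow> 'x graph \<Rightarrow> bool" where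
  "cQ_closed R Q D \<longleftrightarrow> subgraph R D \<and>
     (\<forall>(u, v)\<in>Q. \<forall>g\<in>fst D. \<forall>h\<in>fst D. labels_journey R u D g h \<longleftrightarrow> labels_journey R v D g h)"

definition cQ_closure ::
  "('x imterm \<times> 'x imterm) set \<Rightarrow> ('x imterm \<times> 'x imterm) set \<Rightarrow> 'x graph \<Rightarrow> 'x graph" where
  "cQ_closure R Q D =
     (\<Inter>(fst ` {D'. cQ_closed R Q D' \<and> sub_le D D'}),
      \<Inter>(snd ` {D'. cQ_closed R Q D' \<and> sub_le D D'}))"

definition SQ :: "('x imterm \<times> 'x imterm) set \<Rightarrow> ('x imterm \<times> 'x imterm) set" where
  "SQ R = {(u, v). S_eq R (imterm_tm u) (imterm_tm v)}"

definition FGamma :: "('x imterm \<times> 'x imterm) set \<Rightarrow> 'x imterm \<Rightarrow> 'x graph" where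
  "FGamma R w = cQ_closure R (SQ R) (jsub R (Gone R) w)"

definition P_expansion :: "('x imterm \<times> 'x imterm) set \<Rightarrow> 'x graph \<Rightarrow> 'x graph" where
  "P_expansion R D =
     (fst D \<union> \<Union>{fst (jsub R g v) | g u v. (u, v) \<in> R \<and> g \<in> fst D \<and> sub_le (jsub R g u) D},
      snd D \<union> \<Union>{snd (jsub R g v) | g u v. (u, v) \<in> R \<and> g \<in> fst D \<and> sub_le (jsub R g u) D})"

definition Delta :: "('x imterm \<times> 'x imterm) set \<Rightarrow> 'x imterm \<Rightarrow> nat \<Rightarrow> 'x graph" where
  "Delta R w i = (P_expansion R ^^ i) (jsub R (Gone R) w)"

end

(*
  Interpret a term t by its value in G together with, for each vertex k, the c_R-closure of
  the graph spanned by t read from k (a subterm s^m contributes only its two endpoints).  Terms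
  modulo this interpretation form an F-inverse monoid, and the two sides of each relation in R
  get the same interpretation because c_R-closed graphs transfer journeys along R.  This model
  of FInv<X | R> therefore identifies S-equal terms u and v, so the c_R-closures of their
  journeys coincide and every c_R-closed graph is c_S-closed; hence F Gamma(w) = <w>^{c_R}.

  The union of the iterated P-expansions Delta_i lies in every c_R-closed graph containing
  Delta_0 = <w>, and is itself c_R-closed: a journey is finite, so if it lies in the union it
  lies in some Delta_i, and Delta_{i+1} contains the journey of the partner term (R is
  symmetric).
*)
theory Submission
  imports Defs "HOL-Library.Product_Order"
begin

locale inv_monoid =
  fixes C :: "'a set" and mul :: "'a \<Rightarrow> 'a \<Rightarrow> 'a" (infixl "\<cdot>" 70) and one :: 'a and iv :: "'a \<Rightarrow> 'a"
  assumes inverse_monoid: "inverse_monoid C mul one iv"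
begin

lemma one_closed [simp]: "one \<in> C"
  using inverse_monoid unfolding inverse_monoid_def by blast

lemma mul_closed [simp]: "x \<in> C \<Longrightarrow> y \<in> C \<Longrightarrow> x \<cdot> y \<in> C"
  using inverse_monoid unfolding inverse_monoid_def by blast

lemma iv_closed [simp]: "x \<in> C \<Longrightarrow> iv x \<in> C"
  using inverse_monoid unfolding inverse_monoid_def by blast

lemma assoc: "x \<in> C \<Longrightarrow> y \<in> C \<Longrightarrow> z \<in> C \<Longrightarrow> x \<cdot> y \<cdot> z = x \<cdot> (y \<cdot> z)"
  using inverse_monoid unfolding inverse_monoid_def by blast

lemma left_unit [simp]: "x \<in> C \<Longrightarrow> one \<cdot> x = x"
  using inverse_monoid unfolding inverse_monoid_def by blast

lemma right_unit [simp]: "x \<in> C \<Longrightarrow> x \<cdot> one = x"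
  using inverse_monoid unfolding inverse_monoid_def by blast

lemma mul_iv_mul: "x \<in> C \<Longrightarrow> x \<cdot> iv x \<cdot> x = x"
  using inverse_monoid unfolding inverse_monoid_def by blast

lemma iv_mul_iv: "x \<in> C \<Longrightarrow> iv x \<cdot> x \<cdot> iv x = iv x"
  using inverse_monoid unfolding inverse_monoid_def by blast

lemma iv_unique: "x \<in> C \<Longrightarrow> y \<in> C \<Longrightarrow> x \<cdot> y \<cdot> x = x \<Longrightarrow> y \<cdot> x \<cdot> y = y \<Longrightarrow> y = iv x"
  using inverse_monoid unfolding inverse_monoid_def by blast

lemma iv_idem: "a \<in> C \<Longrightarrow> a \<cdot> a = a \<Longrightarrow> iv a = a"
  using iv_unique[of a a] by simp

lemma mul_iv_idem: "x \<in> C \<Longrightarrow> x \<cdot> iv x \<cdot> (x \<cdot> iv x) = x \<cdot> iv x"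
  by (metis assoc mul_iv_mul iv_closed mul_closed)

lemma iv_mul_idem: "x \<in> C \<Longrightarrow> iv x \<cdot> x \<cdot> (iv x \<cdot> x) = iv x \<cdot> x"
  by (metis assoc mul_iv_mul iv_closed mul_closed)

text \<open>The inverse of \<open>e \<cdot> f\<close> is \<open>f \<cdot> iv (e \<cdot> f) \<cdot> e\<close>, which is therefore idempotent,
  and so is its inverse \<open>e \<cdot> f\<close>.\<close>
lemma idem_mul_idem:
  assumes eC: "e \<in> C" and fC: "f \<in> C" and ee: "e \<cdot> e = e" and ff: "f \<cdot> f = f"
  shows "e \<cdot> f \<cdot> (e \<cdot> f) = e \<cdot> f"
proof -
  define x where "x = e \<cdot> f"
  define a where "a = iv x"
  define b where "b = f \<cdot> a \<cdot> e"
  have xC: "x \<in> C" and aC: "a \<in> C" and bC: "b \<in> C" using eC fC by (simp_all add: x_def a_def b_def)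
  have xax: "x \<cdot> a \<cdot> x = x" and axa: "a \<cdot> x \<cdot> a = a"
    using mul_iv_mul[OF xC] iv_mul_iv[OF xC] by (simp_all add: a_def)
  have "x \<cdot> b \<cdot> x = e \<cdot> (f \<cdot> f) \<cdot> a \<cdot> (e \<cdot> e) \<cdot> f"
    using eC fC aC by (simp add: x_def b_def assoc)
  also have "\<dots> = x \<cdot> a \<cdot> x" using eC fC aC by (simp add: ee ff x_def assoc)
  finally have xbx: "x \<cdot> b \<cdot> x = x" using xax by simp
  have "b \<cdot> x \<cdot> b = f \<cdot> (a \<cdot> (e \<cdot> e) \<cdot> (f \<cdot> f) \<cdot> a) \<cdot> e"
    using eC fC aC by (simp add: x_def b_def assoc)
  also have "\<dots> = f \<cdot> (a \<cdot> x \<cdot> a) \<cdot> e" using eC fC aC by (simp add: ee ff x_def assoc)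
  finally have bxb: "b \<cdot> x \<cdot> b = b" using axa by (simp add: b_def)
  have ab: "a = b" using iv_unique[OF xC bC xbx bxb] by (simp add: a_def)
  have "a \<cdot> a = b \<cdot> b" using ab by simp
  also have "\<dots> = f \<cdot> (a \<cdot> (e \<cdot> f) \<cdot> a) \<cdot> e" using eC fC aC by (simp add: b_def assoc)
  also have "\<dots> = f \<cdot> a \<cdot> e" using axa by (simp add: x_def)
  also have "\<dots> = a" using ab by (simp add: b_def)
  finally have aa: "a \<cdot> a = a" .
  have "x = iv a" using iv_unique[OF aC xC axa xax] .
  also have "\<dots> = a" using iv_idem[OF aC aa] .
  finally show ?thesis using aa x_def by simp
qed

lemma idem_commute:
  assumes eC: "e \<in> C" and fC: "f \<in> C" and ee: "e \<cdot> e = e" and ff: "f \<cdot> f = f"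
  shows "e \<cdot> f = f \<cdot> e"
proof -
  have ef: "e \<cdot> f \<cdot> (e \<cdot> f) = e \<cdot> f" and fe: "f \<cdot> e \<cdot> (f \<cdot> e) = f \<cdot> e"
    using idem_mul_idem assms by blast+
  have "e \<cdot> f \<cdot> (f \<cdot> e) \<cdot> (e \<cdot> f) = e \<cdot> (f \<cdot> f) \<cdot> (e \<cdot> e) \<cdot> f"
    using eC fC by (simp add: assoc)
  then have 1: "e \<cdot> f \<cdot> (f \<cdot> e) \<cdot> (e \<cdot> f) = e \<cdot> f"
    using eC fC ef by (simp add: ee ff assoc)
  have "f \<cdot> e \<cdot> (e \<cdot> f) \<cdot> (f \<cdot> e) = f \<cdot> (e \<cdot> e) \<cdot> (f \<cdot> f) \<cdot> e"
    using eC fC by (simp add: assoc)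
  then have 2: "f \<cdot> e \<cdot> (e \<cdot> f) \<cdot> (f \<cdot> e) = f \<cdot> e"
    using eC fC fe by (simp add: ee ff assoc)
  have "f \<cdot> e = iv (e \<cdot> f)" using iv_unique[OF _ _ 1 2] eC fC by simp
  also have "\<dots> = e \<cdot> f" using iv_idem[OF _ ef] eC fC by simp
  finally show ?thesis by simp
qed

lemma conj_idem:
  assumes cC: "c \<in> C" and eC: "e \<in> C" and ee: "e \<cdot> e = e"
  shows "c \<cdot> e \<cdot> iv c \<cdot> (c \<cdot> e \<cdot> iv c) = c \<cdot> e \<cdot> iv c"
proof -
  have com: "e \<cdot> (iv c \<cdot> c) = iv c \<cdot> c \<cdot> e"
    using idem_commute[OF eC _ ee iv_mul_idem] cC by simp
  have "c \<cdot> e \<cdot> iv c \<cdot> (c \<cdot> e \<cdot> iv c) = c \<cdot> (e \<cdot> (iv c \<cdot> c)) \<cdot> e \<cdot> iv c"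
    using cC eC by (simp add: assoc)
  also have "\<dots> = c \<cdot> iv c \<cdot> c \<cdot> (e \<cdot> e) \<cdot> iv c"
    using cC eC by (simp add: com assoc)
  also have "\<dots> = c \<cdot> e \<cdot> iv c"
    using cC eC by (simp add: ee mul_iv_mul)
  finally show ?thesis .
qed

lemma conj_idem_mul:
  assumes cC: "c \<in> C" and eC: "e \<in> C" and ee: "e \<cdot> e = e" and xC: "x \<in> C"
  shows "c \<cdot> e \<cdot> iv c \<cdot> (c \<cdot> x) = c \<cdot> (e \<cdot> x)"
proof -
  have com: "e \<cdot> (iv c \<cdot> c) = iv c \<cdot> c \<cdot> e"
    using idem_commute[OF eC _ ee iv_mul_idem] cC by simp
  have "c \<cdot> e \<cdot> iv c \<cdot> (c \<cdot> x) = c \<cdot> (e \<cdot> (iv c \<cdot> c)) \<cdot> x"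
    using cC eC xC by (simp add: assoc)
  also have "\<dots> = c \<cdot> iv c \<cdot> c \<cdot> (e \<cdot> x)"
    using cC eC xC by (simp add: com assoc)
  also have "\<dots> = c \<cdot> (e \<cdot> x)"
    using cC eC xC by (simp add: mul_iv_mul)
  finally show ?thesis .
qed

lemma idem_mul_eq_trans:
  assumes "e1 \<in> C" "e2 \<in> C" "e1 \<cdot> e1 = e1" "e2 \<cdot> e2 = e2" "t1 \<in> C" "t2 \<in> C" "t3 \<in> C"
    and "e1 \<cdot> t1 = e1 \<cdot> t2" "e2 \<cdot> t2 = e2 \<cdot> t3"
  shows "e1 \<cdot> e2 \<cdot> t1 = e1 \<cdot> e2 \<cdot> t3"
proof -
  have c: "e1 \<cdot> e2 = e2 \<cdot> e1" using idem_commute assms by simp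
  have "e1 \<cdot> e2 \<cdot> t1 = e2 \<cdot> (e1 \<cdot> t2)" using c assms by (simp add: assoc)
  also have "\<dots> = e1 \<cdot> (e2 \<cdot> t3)" using c assms by (metis assoc)
  also have "\<dots> = e1 \<cdot> e2 \<cdot> t3" using assms by (simp add: assoc)
  finally show ?thesis .
qed

lemma below_eq_mul_iv_mul:
  assumes mC: "m \<in> C" and fC: "f \<in> C" and ff: "f \<cdot> f = f" and s: "s = f \<cdot> m"
  shows "s \<cdot> iv s \<cdot> m = s"
proof -
  have sC: "s \<in> C" using s fC mC by simp
  have fs: "f \<cdot> s = s" using s ff fC mC by (metis assoc)
  have "s \<cdot> iv s = f \<cdot> (s \<cdot> iv s)" using fs fC sC assoc[of f s "iv s"] by simp
  also have "\<dots> = s \<cdot> iv s \<cdot> f" using idem_commute[OF fC _ ff mul_iv_idem] sC by simp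
  finally have "s \<cdot> iv s \<cdot> m = s \<cdot> iv s \<cdot> f \<cdot> m" by simp
  also have "\<dots> = s \<cdot> iv s \<cdot> s" using s sC fC mC by (simp add: assoc)
  finally have "s \<cdot> iv s \<cdot> m = s \<cdot> iv s \<cdot> s" .
  then show ?thesis using mul_iv_mul sC by simp
qed

end

section \<open>Equality in \<open>S\<close> and in its greatest group image\<close>

locale R_model = inv_monoid C mul one iv
  for R :: "('x imterm \<times> 'x imterm) set" and C :: "'x tm set"
    and mul (infixl "\<cdot>" 70) and one and iv +
  fixes mx :: "'x tm \<Rightarrow> 'x tm" and \<phi> :: "'x \<Rightarrow> 'x tm"
  assumes F_inverse: "F_inverse_monoid C mul one iv mx"
    and var_closed: "range \<phi> \<subseteq> C"
    and satisfies_R: "(u, v) \<in> R \<Longrightarrow>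
      eval_tm mul one iv mx \<phi> (imterm_tm u) = eval_tm mul one iv mx \<phi> (imterm_tm v)"
begin

abbreviation ev :: "'x tm \<Rightarrow> 'x tm" where "ev \<equiv> eval_tm mul one iv mx \<phi>"

lemma mx_closed: "s \<in> C \<Longrightarrow> mx s \<in> C"
  using F_inverse unfolding F_inverse_monoid_def by blast

lemma ev_closed [simp]: "ev t \<in> C"
  by (induction t) (use var_closed mx_closed in auto)

lemma below_mx: "s \<in> C \<Longrightarrow> \<exists>f\<in>C. f \<cdot> f = f \<and> s = f \<cdot> mx s"
proof -
  assume s: "s \<in> C"
  have "sigma_rel C mul s s" unfolding sigma_rel_def using s by (intro bexI[of _ one]) simp_all
  then have "nat_le C mul s (mx s)" using F_inverse s unfolding F_inverse_monoid_def by blast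
  then show ?thesis unfolding nat_le_def by blast
qed

lemma ev_eq_if_S_eq: "S_eq R a b \<Longrightarrow> ev a = ev b"
  using F_inverse var_closed satisfies_R unfolding S_eq_def by blast

end

lemma S_eqI:
  fixes R :: "('x imterm \<times> 'x imterm) set"
  assumes "\<And>C mul one iv mx \<phi>. R_model R C mul one iv mx \<phi> \<Longrightarrow>
    eval_tm mul one iv mx \<phi> a = eval_tm mul one iv mx \<phi> b"
  shows "S_eq R a b"
  unfolding S_eq_def
proof (intro allI impI, elim conjE)
  fix C :: "'x tm set" and mul one iv mx \<phi>
  assume "F_inverse_monoid C mul one iv mx" "range \<phi> \<subseteq> C"
    "\<forall>(u, v)\<in>R. eval_tm mul one iv mx \<phi> (imterm_tm u) = eval_tm mul one iv mx \<phi> (imterm_tm v)"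
  then have "R_model R C mul one iv mx \<phi>"
    by unfold_locales (auto simp: F_inverse_monoid_def)
  then show "eval_tm mul one iv mx \<phi> a = eval_tm mul one iv mx \<phi> b" by (rule assms)
qed

lemma S_eq_R: "(u, v) \<in> R \<Longrightarrow> S_eq R (imterm_tm u) (imterm_tm v)"
  by (rule S_eqI) (rule R_model.satisfies_R)

lemma S_eq_sym: "S_eq R a b \<Longrightarrow> S_eq R b a"
  by (rule S_eqI) (simp add: R_model.ev_eq_if_S_eq)

lemma G_eqI:
  assumes "\<And>C mul one iv mx \<phi>. R_model R C mul one iv mx \<phi> \<Longrightarrow>
    mul (eval_tm mul one iv mx \<phi> e) (eval_tm mul one iv mx \<phi> e) = eval_tm mul one iv mx \<phi> e \<and>
    mul (eval_tm mul one iv mx \<phi> e) (eval_tm mul one iv mx \<phi> a) =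
      mul (eval_tm mul one iv mx \<phi> e) (eval_tm mul one iv mx \<phi> b)"
  shows "G_eq R a b"
  unfolding G_eq_def using assms by (intro exI[of _ e] conjI S_eqI) auto

lemma G_eq_if_S_eq: "S_eq R a b \<Longrightarrow> G_eq R a b"
proof (rule G_eqI[of _ One], goal_cases)
  case (1 C mul one iv mx \<phi>)
  then interpret R_model R C mul one iv mx \<phi> by simp
  show ?case using 1 by (simp add: ev_eq_if_S_eq)
qed

lemma G_eq_refl: "G_eq R a a"
  by (rule G_eq_if_S_eq) (rule S_eqI, rule refl)

lemma G_eq_sym: "G_eq R a b \<Longrightarrow> G_eq R b a"
  unfolding G_eq_def using S_eq_sym by blast

lemma G_eq_trans:
  assumes ab: "G_eq R a b" and bc: "G_eq R b c"
  shows "G_eq R a c"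
proof -
  obtain e1 where e1: "S_eq R (Mul e1 e1) e1" "S_eq R (Mul e1 a) (Mul e1 b)"
    using ab unfolding G_eq_def by blast
  obtain e2 where e2: "S_eq R (Mul e2 e2) e2" "S_eq R (Mul e2 b) (Mul e2 c)"
    using bc unfolding G_eq_def by blast
  show ?thesis
  proof (rule G_eqI[of _ "Mul e1 e2"], goal_cases)
    case (1 C mul one iv mx \<phi>)
    then interpret R_model R C mul one iv mx \<phi> .
    show ?case
      using ev_eq_if_S_eq[OF e1(1)] ev_eq_if_S_eq[OF e1(2)] ev_eq_if_S_eq[OF e2(1)] ev_eq_if_S_eq[OF e2(2)]
        idem_mul_idem idem_mul_eq_trans[of "ev e1" "ev e2" "ev a" "ev b" "ev c"]
      by simp
  qed
qed

lemma G_eq_Mul_right: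
  assumes "G_eq R a b"
  shows "G_eq R (Mul a c) (Mul b c)"
proof -
  obtain e where e: "S_eq R (Mul e e) e" "S_eq R (Mul e a) (Mul e b)"
    using assms unfolding G_eq_def by blast
  show ?thesis
  proof (rule G_eqI[of _ e], goal_cases)
    case (1 C mul one iv mx \<phi>)
    then interpret R_model R C mul one iv mx \<phi> .
    show ?case using ev_eq_if_S_eq[OF e(1)] ev_eq_if_S_eq[OF e(2)] by (simp flip: assoc)
  qed
qed

text \<open>Left multiplication is compatible because \<open>c e c\<^sup>-\<^sup>1\<close> is again idempotent.\<close>
lemma G_eq_Mul_left:
  assumes "G_eq R a b"
  shows "G_eq R (Mul c a) (Mul c b)"
proof -
  obtain e where e: "S_eq R (Mul e e) e" "S_eq R (Mul e a) (Mul e b)"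
    using assms unfolding G_eq_def by blast
  show ?thesis
  proof (rule G_eqI[of _ "Mul (Mul c e) (Inv c)"], goal_cases)
    case (1 C mul one iv mx \<phi>)
    then interpret R_model R C mul one iv mx \<phi> .
    show ?case using ev_eq_if_S_eq[OF e(1)] ev_eq_if_S_eq[OF e(2)] conj_idem conj_idem_mul by simp
  qed
qed

lemma G_eq_Mul: "G_eq R a a' \<Longrightarrow> G_eq R b b' \<Longrightarrow> G_eq R (Mul a b) (Mul a' b')"
  by (blast intro: G_eq_Mul_left G_eq_Mul_right G_eq_trans)

lemma G_eq_by_identity:
  assumes "\<And>C mul one iv mx \<phi>. R_model R C mul one iv mx \<phi> \<Longrightarrow>
    eval_tm mul one iv mx \<phi> a = eval_tm mul one iv mx \<phi> b"
  shows "G_eq R a b"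
  using assms by (intro G_eq_if_S_eq S_eqI)

lemma G_eq_assoc: "G_eq R (Mul (Mul a b) c) (Mul a (Mul b c))"
proof (rule G_eq_by_identity, goal_cases)
  case (1 C mul one iv mx \<phi>)
  then interpret R_model R C mul one iv mx \<phi> .
  show ?case by (simp add: assoc)
qed

lemma G_eq_left_unit: "G_eq R (Mul One a) a"
proof (rule G_eq_by_identity, goal_cases)
  case (1 C mul one iv mx \<phi>)
  then interpret R_model R C mul one iv mx \<phi> .
  show ?case by (simp add: left_unit)
qed

lemma G_eq_right_unit: "G_eq R (Mul a One) a"
proof (rule G_eq_by_identity, goal_cases)
  case (1 C mul one iv mx \<phi>)
  then interpret R_model R C mul one iv mx \<phi> .
  show ?case by (simp add: right_unit)
qed

lemma G_eq_right_inverse: "G_eq R (Mul a (Inv a)) One"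
proof (rule G_eqI[of _ "Mul a (Inv a)"], goal_cases)
  case (1 C mul one iv mx \<phi>)
  then interpret R_model R C mul one iv mx \<phi> .
  show ?case using mul_iv_idem by simp
qed

lemma G_eq_left_inverse: "G_eq R (Mul (Inv a) a) One"
proof (rule G_eqI[of _ "Mul (Inv a) a"], goal_cases)
  case (1 C mul one iv mx \<phi>)
  then interpret R_model R C mul one iv mx \<phi> .
  show ?case using iv_mul_idem by simp
qed

lemma G_eq_Mx: "G_eq R (Mx a) a"
proof (rule G_eqI[of _ "Mul a (Inv a)"], goal_cases)
  case (1 C mul one iv mx \<phi>)
  then interpret R_model R C mul one iv mx \<phi> .
  obtain f where "f \<in> C" "mul f f = f" "ev a = mul f (mx (ev a))"
    using below_mx[of "ev a"] by auto
  then have "mul (mul (ev a) (iv (ev a))) (mx (ev a)) = ev a"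
    using below_eq_mul_iv_mul[of "mx (ev a)" f "ev a"] mx_closed by simp
  then show ?case using mul_iv_idem mul_iv_mul by simp
qed

lemma Gcls_eq_iff: "Gcls R a = Gcls R b \<longleftrightarrow> G_eq R a b"
  unfolding Gcls_def using G_eq_refl G_eq_sym G_eq_trans by blast

lemma gmul_Gcls: "gmul R (Gcls R a) t = Gcls R (Mul a t)"
  unfolding gmul_def Gcls_def using G_eq_refl G_eq_Mul_right G_eq_trans by blast

lemma Gverts_cases:
  assumes "g \<in> Gverts R"
  obtains a where "g = Gcls R a"
  using assms unfolding Gverts_def by blast

lemma Gcls_in_Gverts [simp]: "Gcls R a \<in> Gverts R"
  unfolding Gverts_def by blast

lemma Gone_in_Gverts [simp]: "Gone R \<in> Gverts R"
  unfolding Gone_def by simp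

lemma gmul_in_Gverts [simp]: "g \<in> Gverts R \<Longrightarrow> gmul R g t \<in> Gverts R"
  by (erule Gverts_cases) (simp add: gmul_Gcls)

lemma gmul_gmul: "g \<in> Gverts R \<Longrightarrow> gmul R (gmul R g s) t = gmul R g (Mul s t)"
  by (erule Gverts_cases) (simp add: gmul_Gcls Gcls_eq_iff G_eq_assoc)

lemma gmul_cong: "g \<in> Gverts R \<Longrightarrow> G_eq R s t \<Longrightarrow> gmul R g s = gmul R g t"
  by (erule Gverts_cases) (simp add: gmul_Gcls Gcls_eq_iff G_eq_Mul_left)

lemma gmul_One [simp]: "g \<in> Gverts R \<Longrightarrow> gmul R g One = g"
  by (erule Gverts_cases) (simp add: gmul_Gcls Gcls_eq_iff G_eq_right_unit)

lemma gmul_gmul_Inv [simp]: "g \<in> Gverts R \<Longrightarrow> gmul R (gmul R g t) (Inv t) = g"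
  by (simp add: gmul_gmul gmul_cong[OF _ G_eq_right_inverse])

lemma gmul_Inv_gmul [simp]: "g \<in> Gverts R \<Longrightarrow> gmul R (gmul R g (Inv t)) t = g"
  by (simp add: gmul_gmul gmul_cong[OF _ G_eq_left_inverse])

lemma gmul_Mx [simp]: "g \<in> Gverts R \<Longrightarrow> gmul R g (Mx t) = gmul R g t"
  by (simp add: gmul_cong[OF _ G_eq_Mx])

lemma gmul_Gone: "gmul R (Gone R) t = Gcls R t"
  by (simp add: Gone_def gmul_Gcls Gcls_eq_iff G_eq_left_unit)

lemma G_eq_if_gmul_eq:
  assumes g: "g \<in> Gverts R" and eq: "gmul R g s = gmul R g t"
  shows "G_eq R s t"
proof -
  from g obtain a where a: "g = Gcls R a" by (cases rule: Gverts_cases)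
  let ?h = "Gcls R (Inv a)"
  have "Gcls R s = gmul R (gmul R ?h a) s" by (simp flip: gmul_Gone)
  also have "\<dots> = gmul R ?h (Mul a s)" by (simp add: gmul_gmul)
  also have "\<dots> = gmul R ?h (Mul a t)"
    using eq a by (simp add: gmul_Gcls Gcls_eq_iff G_eq_Mul_left)
  also have "\<dots> = Gcls R t" by (simp flip: gmul_Gone gmul_gmul)
  finally show ?thesis by (simp add: Gcls_eq_iff)
qed

lemma G_eq_Inv: "G_eq R a b \<Longrightarrow> G_eq R (Inv a) (Inv b)"
proof (rule G_eq_if_gmul_eq[of "Gone R"])
  assume ab: "G_eq R a b"
  let ?g = "gmul R (Gone R) (Inv a)"
  have "?g = gmul R (gmul R ?g b) (Inv b)" by simp
  also have "\<dots> = gmul R (gmul R ?g a) (Inv b)"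
    using ab by (simp add: gmul_cong[of _ R b a] G_eq_sym)
  also have "\<dots> = gmul R (Gone R) (Inv b)" by simp
  finally show "?g = gmul R (Gone R) (Inv b)" .
qed simp

lemma inv_inv_letter [simp]: "inv_letter (inv_letter a) = a"
  by (simp add: inv_letter_def)

lemma gmul_letter_inv_letter [simp]:
  "g \<in> Gverts R \<Longrightarrow> gmul R (gmul R g (letter_tm a)) (letter_tm (inv_letter a)) = g"
  by (cases a) (auto simp: letter_tm_def inv_letter_def)

text \<open>Graphs are pairs (vertices, edges) ordered componentwise, so \<open>sub_le\<close> is \<open>\<le>\<close> and unions
  and intersections of graphs are suprema and infima in this complete lattice.\<close>

lemma sub_le_iff_le [simp]: "sub_le A B \<longleftrightarrow> A \<le> B"
  by (simp add: sub_le_def less_eq_prod_def)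

definition Cayley_graph :: "('x imterm \<times> 'x imterm) set \<Rightarrow> 'x graph" where
  "Cayley_graph R = (Gverts R, Gedges R)"

lemma subgraph_iff: "subgraph R D \<longleftrightarrow> fst D \<subseteq> Gverts R \<and> snd D \<subseteq> Gedges R \<and>
  (\<forall>g a h. (g, a, h) \<in> snd D \<longrightarrow> g \<in> fst D \<and> h \<in> fst D \<and> (h, inv_letter a, g) \<in> snd D)"
  unfolding subgraph_def by fast

lemma edge_in_Gedges: "g \<in> Gverts R \<Longrightarrow> (g, a, gmul R g (letter_tm a)) \<in> Gedges R"
  unfolding Gedges_def by blast

lemma inverse_edge_in_Gedges: "g \<in> Gverts R \<Longrightarrow> (gmul R g (letter_tm a), inv_letter a, g) \<in> Gedges R"
  using edge_in_Gedges[of "gmul R g (letter_tm a)" R "inv_letter a"] by simp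

lemma Gedges_cases:
  assumes "(g, a, h) \<in> Gedges R"
  obtains "g \<in> Gverts R" and "h = gmul R g (letter_tm a)"
  using assms unfolding Gedges_def by blast

lemma fst_Cayley_graph [simp]: "fst (Cayley_graph R) = Gverts R"
  by (simp add: Cayley_graph_def)

lemma subgraph_Cayley_graph: "subgraph R (Cayley_graph R)"
  unfolding subgraph_iff Cayley_graph_def
  by (auto elim!: Gedges_cases intro: inverse_edge_in_Gedges)

lemma subgraph_le_Cayley_graph: "subgraph R D \<Longrightarrow> D \<le> Cayley_graph R"
  unfolding subgraph_def Cayley_graph_def by (simp add: less_eq_prod_def)

lemma subgraph_Sup: "(\<And>D. D \<in> F \<Longrightarrow> subgraph R D) \<Longrightarrow> subgraph R (Sup F)"
  unfolding subgraph_def fst_Sup snd_Sup by fast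

lemma subgraph_sup: "subgraph R A \<Longrightarrow> subgraph R B \<Longrightarrow> subgraph R (sup A B)"
  using subgraph_Sup[of "{A, B}" R] by auto

lemma subgraph_Inf:
  assumes "F \<noteq> {}" and "\<And>D. D \<in> F \<Longrightarrow> subgraph R D"
  shows "subgraph R (Inf F)"
  unfolding subgraph_iff fst_Inf snd_Inf
proof (intro conjI allI impI)
  obtain D0 where D0: "D0 \<in> F" using assms(1) by blast
  then have "(INF D\<in>F. fst D) \<subseteq> fst D0" "(INF D\<in>F. snd D) \<subseteq> snd D0"
    by (simp_all add: INF_lower)
  then show "(INF D\<in>F. fst D) \<subseteq> Gverts R" "(INF D\<in>F. snd D) \<subseteq> Gedges R"
    using assms(2)[OF D0] unfolding subgraph_iff by blast+
  fix g a h assume e: "(g, a, h) \<in> (INF D\<in>F. snd D)"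
  have "g \<in> fst D \<and> h \<in> fst D \<and> (h, inv_letter a, g) \<in> snd D" if "D \<in> F" for D
  proof -
    from e that have "(g, a, h) \<in> snd D" by auto
    with assms(2)[OF that] show ?thesis unfolding subgraph_iff by blast
  qed
  then show "g \<in> (INF D\<in>F. fst D)" "h \<in> (INF D\<in>F. fst D)" "(h, inv_letter a, g) \<in> (INF D\<in>F. snd D)"
    by auto
qed

lemma subgraph_vertices: "V \<subseteq> Gverts R \<Longrightarrow> subgraph R (V, {})"
  unfolding subgraph_def by simp

lemma start_in_path_sub [simp]: "h \<in> fst (path_sub R h u)"
  by (cases u) auto

lemma end_in_path_sub: "h \<in> Gverts R \<Longrightarrow> gmul R h (word_tm u) \<in> fst (path_sub R h u)"
  by (induction u arbitrary: h) (simp_all flip: gmul_gmul)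

lemma subgraph_path_sub: "h \<in> Gverts R \<Longrightarrow> subgraph R (path_sub R h u)"
proof (induction u arbitrary: h)
  case (Cons a u)
  define h' where "h' = gmul R h (letter_tm a)"
  have "h' \<in> Gverts R" "(h, a, h') \<in> Gedges R" "(h', inv_letter a, h) \<in> Gedges R"
    using Cons.prems by (simp_all add: h'_def edge_in_Gedges inverse_edge_in_Gedges)
  with Cons.IH[of h'] Cons.prems show ?case
    unfolding subgraph_def by (auto simp: h'_def[symmetric])
qed (simp add: subgraph_vertices)

lemma finite_path_sub: "finite (fst (path_sub R h u)) \<and> finite (snd (path_sub R h u))"
  by (induction u arbitrary: h) auto

text \<open>A subterm \<open>s\<^sup>m\<close> contributes only the two endpoints of \<open>s\<close>, exactly as the factors
  \<open>v\<^sub>i\<^sup>m\<close> of a journey do.\<close>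
fun term_graph :: "('x imterm \<times> 'x imterm) set \<Rightarrow> 'x vert \<Rightarrow> 'x tm \<Rightarrow> 'x graph" where
  "term_graph R k (Var x) = path_sub R k [(x, False)]"
| "term_graph R k One = ({k}, {})"
| "term_graph R k (Mul s t) = sup (term_graph R k s) (term_graph R (gmul R k s) t)"
| "term_graph R k (Inv s) = term_graph R (gmul R k (Inv s)) s"
| "term_graph R k (Mx s) = ({k, gmul R k s}, {})"

lemma term_graph_endpoints:
  "k \<in> Gverts R \<Longrightarrow> k \<in> fst (term_graph R k t) \<and> gmul R k t \<in> fst (term_graph R k t)"
proof (induction t arbitrary: k)
  case (Var x)
  then show ?case using end_in_path_sub[of k R "[(x, False)]"] by (simp add: letter_tm_def)
next
  case (Mul s t)
  then show ?case using Mul.IH(2)[of "gmul R k s"] by (auto simp: gmul_gmul)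
next
  case (Inv s)
  then show ?case using Inv.IH[of "gmul R k (Inv s)"] by simp
qed simp_all

lemma start_in_term_graph [simp]: "k \<in> Gverts R \<Longrightarrow> k \<in> fst (term_graph R k t)"
  and end_in_term_graph [simp]: "k \<in> Gverts R \<Longrightarrow> gmul R k t \<in> fst (term_graph R k t)"
  using term_graph_endpoints by blast+

lemma subgraph_term_graph: "k \<in> Gverts R \<Longrightarrow> subgraph R (term_graph R k t)"
proof (induction t arbitrary: k)
  case (Var x)
  show ?case using subgraph_path_sub[OF Var, of "[(x, False)]"] by (simp only: term_graph.simps)
qed (simp_all add: subgraph_sup subgraph_vertices)

lemma term_graph_le_Cayley_graph: "k \<in> Gverts R \<Longrightarrow> term_graph R k t \<le> Cayley_graph R"
  by (simp add: subgraph_le_Cayley_graph subgraph_term_graph)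

lemma term_graph_word: "k \<in> Gverts R \<Longrightarrow> term_graph R k (word_tm u) = path_sub R k u"
proof (induction u arbitrary: k)
  case (Cons a u)
  let ?k' = "gmul R k (letter_tm a)"
  have "term_graph R k (letter_tm a) = ({k, ?k'}, {(k, a, ?k'), (?k', inv_letter a, k)})"
    using Cons.prems by (cases a) (auto simp: letter_tm_def inv_letter_def)
  with Cons show ?case by (simp add: sup_prod_def insert_absorb)
qed simp

lemma gmul_word_append:
  "g \<in> Gverts R \<Longrightarrow> gmul R g (word_tm (p @ q)) = gmul R (gmul R g (word_tm p)) (word_tm q)"
  by (induction p arbitrary: g) (simp_all add: gmul_gmul[symmetric])

lemma term_graph_foldl:
  assumes k: "k \<in> Gverts R" and acc: "gmul R k acc = gmul R k (word_tm pre)"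
  shows "term_graph R k (foldl (\<lambda>acc (v, u). Mul (Mul acc (Mx (word_tm v))) (word_tm u)) acc ps)
    = sup (term_graph R k acc) (SUP (h, u)\<in>set (jaux R k pre ps). path_sub R h u)"
  using acc
proof (induction ps arbitrary: acc pre)
  case (Cons p ps)
  obtain v u where p: "p = (v, u)" by (cases p)
  define acc' where "acc' = Mul (Mul acc (Mx (word_tm v))) (word_tm u)"
  define h where "h = gmul R k (word_tm (pre @ v))"
  have h: "h \<in> Gverts R" and kacc: "gmul R k (Mul acc (Mx (word_tm v))) = h"
    using k Cons.prems by (simp_all add: h_def gmul_word_append flip: gmul_gmul)
  have "gmul R k acc' = gmul R k (word_tm (pre @ v @ u))"
    using k h kacc by (simp add: acc'_def h_def gmul_word_append flip: gmul_gmul)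
  note IH = Cons.IH[OF this]
  have "term_graph R k acc' = sup (term_graph R k acc) (path_sub R h u)"
    using k h kacc by (auto simp: acc'_def term_graph_word sup_Pair_Pair simp flip: gmul_gmul
      intro!: prod_eqI)
  then show ?case
    using IH by (simp add: p acc'_def[symmetric] h_def[symmetric] sup_assoc)
qed simp

lemma term_graph_imterm:
  assumes "k \<in> Gverts R"
  shows "term_graph R k (imterm_tm w) = jsub R k w"
proof -
  have "term_graph R k (imterm_tm w) =
      sup (path_sub R k (fst w)) (SUP (h, u)\<in>set (jaux R k (fst w) (snd w)). path_sub R h u)"
    unfolding imterm_tm_def using assms by (simp add: term_graph_foldl term_graph_word)
  also have "\<dots> = jsub R k w"
    by (simp add: jsub_def jstarts_def SUP_prod_alt_def sup_prod_def split_def)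
  finally show ?thesis .
qed

lemma subgraph_jsub: "g \<in> Gverts R \<Longrightarrow> subgraph R (jsub R g w)"
  using subgraph_term_graph term_graph_imterm by metis

lemma end_in_jsub: "g \<in> Gverts R \<Longrightarrow> gmul R g (imterm_tm w) \<in> fst (jsub R g w)"
  using end_in_term_graph term_graph_imterm by metis

lemma start_in_jsub: "g \<in> Gverts R \<Longrightarrow> g \<in> fst (jsub R g w)"
  using start_in_term_graph term_graph_imterm by metis

lemma jsub_le_Cayley_graph: "g \<in> Gverts R \<Longrightarrow> jsub R g w \<le> Cayley_graph R"
  by (simp add: subgraph_jsub subgraph_le_Cayley_graph)

lemma finite_jsub: "finite (fst (jsub R g w)) \<and> finite (snd (jsub R g w))"
  unfolding jsub_def using finite_path_sub by auto

section \<open>\<open>c\<^sub>Q\<close>-closure\<close>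

definition G_kernel :: "('x imterm \<times> 'x imterm) set \<Rightarrow> ('x imterm \<times> 'x imterm) set" where
  "G_kernel R = {(u, v). G_eq R (imterm_tm u) (imterm_tm v)}"

lemma R_subset_G_kernel: "R \<subseteq> G_kernel R"
  unfolding G_kernel_def using S_eq_R G_eq_if_S_eq by blast

lemma R_subset_SQ: "R \<subseteq> SQ R"
  unfolding SQ_def using S_eq_R by blast

lemma SQ_subset_G_kernel: "SQ R \<subseteq> G_kernel R"
  unfolding G_kernel_def SQ_def using G_eq_if_S_eq by blast

text \<open>When \<open>u\<close> and \<open>v\<close> have the same value in \<open>G\<close>, their journeys from \<open>g\<close> end at the same
  vertex, so \<open>c\<^sub>Q\<close>-closedness only asks that the journeys lie in \<open>X\<close> simultaneously.\<close>
lemma cQ_closed_iff: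
  assumes "Q \<subseteq> G_kernel R"
  shows "cQ_closed R Q X \<longleftrightarrow> subgraph R X \<and>
    (\<forall>(u, v)\<in>Q. \<forall>g\<in>fst X. jsub R g u \<le> X \<longleftrightarrow> jsub R g v \<le> X)"
proof -
  have "(\<forall>h\<in>fst X. labels_journey R u X g h \<longleftrightarrow> labels_journey R v X g h) \<longleftrightarrow>
      (jsub R g u \<le> X \<longleftrightarrow> jsub R g v \<le> X)"
    if uv: "(u, v) \<in> Q" and g: "g \<in> fst X" and X: "subgraph R X" for u v g
  proof -
    have gV: "g \<in> Gverts R" using g X unfolding subgraph_def by blast
    define h where "h = gmul R g (imterm_tm u)"
    have hu: "gmul R g (imterm_tm u) = h" by (simp add: h_def)
    have hv: "gmul R g (imterm_tm v) = h"
      using assms uv gmul_cong[OF gV] unfolding h_def G_kernel_def by auto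
    have "h \<in> fst X" if "jsub R g x \<le> X" "gmul R g (imterm_tm x) = h" for x
      using that end_in_jsub[OF gV, of x] by (auto simp: less_eq_prod_def)
    with hu hv have "jsub R g u \<le> X \<Longrightarrow> h \<in> fst X" "jsub R g v \<le> X \<Longrightarrow> h \<in> fst X"
      by blast+
    then show ?thesis
      unfolding labels_journey_def sub_le_iff_le hu hv by blast
  qed
  then show ?thesis unfolding cQ_closed_def by fast
qed

lemma closed_journey_iff:
  assumes "cQ_closed R Q X" "Q \<subseteq> G_kernel R" "(u, v) \<in> Q" "g \<in> fst X"
  shows "jsub R g u \<le> X \<longleftrightarrow> jsub R g v \<le> X"
  using assms(1,3,4) unfolding cQ_closed_iff[OF assms(2)] by (auto dest!: bspec[where x="(u, v)"])

lemma closed_Cayley_graph: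
  assumes "Q \<subseteq> G_kernel R"
  shows "cQ_closed R Q (Cayley_graph R)"
proof -
  have "jsub R g w \<le> Cayley_graph R" if "g \<in> fst (Cayley_graph R)" for g w
    using that jsub_le_Cayley_graph by (simp add: fst_Cayley_graph)
  then show ?thesis by (simp add: cQ_closed_iff[OF assms] subgraph_Cayley_graph)
qed

lemma closed_Inf:
  assumes Q: "Q \<subseteq> G_kernel R" and "F \<noteq> {}" and closed: "\<And>X. X \<in> F \<Longrightarrow> cQ_closed R Q X"
  shows "cQ_closed R Q (Inf F)"
proof -
  have "jsub R g u \<le> Inf F \<longleftrightarrow> jsub R g v \<le> Inf F" if "(u, v) \<in> Q" "g \<in> fst (Inf F)" for u v g
  proof -
    have "\<forall>X\<in>F. jsub R g u \<le> X \<longleftrightarrow> jsub R g v \<le> X"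
      using that closed closed_journey_iff[OF _ Q] by (simp add: fst_Inf)
    then show ?thesis by (simp add: le_Inf_iff)
  qed
  moreover have "subgraph R (Inf F)"
    using \<open>F \<noteq> {}\<close> closed by (simp add: subgraph_Inf cQ_closed_def)
  ultimately show ?thesis by (auto simp: cQ_closed_iff[OF Q])
qed

lemma cQ_closure_eq_Inf: "cQ_closure R Q D = Inf {X. cQ_closed R Q X \<and> D \<le> X}"
  by (simp add: cQ_closure_def Inf_prod_def)

lemma closure_upper: "D \<le> cQ_closure R Q D"
  by (simp add: cQ_closure_eq_Inf le_Inf_iff)

lemma closure_least: "cQ_closed R Q X \<Longrightarrow> D \<le> X \<Longrightarrow> cQ_closure R Q D \<le> X"
  by (simp add: cQ_closure_eq_Inf Inf_lower)

lemma closure_closed: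
  assumes "Q \<subseteq> G_kernel R" and "D \<le> Cayley_graph R"
  shows "cQ_closed R Q (cQ_closure R Q D)"
proof -
  have "Cayley_graph R \<in> {X. cQ_closed R Q X \<and> D \<le> X}"
    using assms closed_Cayley_graph by blast
  then have ne: "{X. cQ_closed R Q X \<and> D \<le> X} \<noteq> {}" by blast
  show ?thesis
    unfolding cQ_closure_eq_Inf by (rule closed_Inf[OF assms(1) ne]) simp
qed

lemma closure_le_iff: "cQ_closed R Q X \<Longrightarrow> cQ_closure R Q D \<le> X \<longleftrightarrow> D \<le> X"
  using closure_least order.trans[OF closure_upper] by blast

lemma closure_le_Cayley_graph:
  "Q \<subseteq> G_kernel R \<Longrightarrow> D \<le> Cayley_graph R \<Longrightarrow> cQ_closure R Q D \<le> Cayley_graph R"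
  by (rule closure_least[OF closed_Cayley_graph])

lemma closure_sup_closure:
  assumes Q: "Q \<subseteq> G_kernel R" and "A \<le> Cayley_graph R" and "B \<le> Cayley_graph R"
  shows "cQ_closure R Q (sup (cQ_closure R Q A) (cQ_closure R Q B)) = cQ_closure R Q (sup A B)"
    (is "cQ_closure R Q ?S = _")
proof (rule antisym)
  have closed: "cQ_closed R Q (cQ_closure R Q (sup A B))"
    using assms by (simp add: closure_closed)
  have "A \<le> cQ_closure R Q (sup A B)" "B \<le> cQ_closure R Q (sup A B)"
    using closure_upper[of "sup A B" R Q] by auto
  then have "?S \<le> cQ_closure R Q (sup A B)"
    using closed by (simp add: closure_least)
  with closed show "cQ_closure R Q ?S \<le> cQ_closure R Q (sup A B)"
    by (rule closure_least)
  have "?S \<le> Cayley_graph R"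
    using assms by (simp add: closure_le_Cayley_graph)
  moreover have "sup A B \<le> ?S"
    using closure_upper by (rule sup_mono) (rule closure_upper)
  ultimately show "cQ_closure R Q (sup A B) \<le> cQ_closure R Q ?S"
    using Q by (meson closure_closed closure_least closure_upper order.trans)
qed

lemma closure_eqI:
  assumes Q: "Q \<subseteq> G_kernel R" and "A \<le> Cayley_graph R" "B \<le> Cayley_graph R"
    and "A \<le> cQ_closure R Q B" "B \<le> cQ_closure R Q A"
  shows "cQ_closure R Q A = cQ_closure R Q B"
  using assms by (intro antisym closure_least closure_closed)

lemma closure_cong:
  "(\<And>X. cQ_closed R Q X \<longleftrightarrow> cQ_closed R Q' X) \<Longrightarrow> cQ_closure R Q D = cQ_closure R Q' D"
  by (simp add: cQ_closure_def)

locale term_congruence =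
  fixes f :: "'x tm \<Rightarrow> 'b"
  assumes f_Mul: "f a = f a' \<Longrightarrow> f b = f b' \<Longrightarrow> f (Mul a b) = f (Mul a' b')"
    and f_Inv: "f a = f a' \<Longrightarrow> f (Inv a) = f (Inv a')"
    and f_Mx: "f a = f a' \<Longrightarrow> f (Mx a) = f (Mx a')"
begin

definition rep :: "'x tm \<Rightarrow> 'x tm" where
  "rep t = (SOME t'. f t' = f t)"

lemma f_rep [simp]: "f (rep t) = f t"
  unfolding rep_def by (rule someI_ex) blast

lemma rep_eq_iff: "rep s = rep t \<longleftrightarrow> f s = f t"
  by (metis f_rep rep_def)

lemma rep_eqI: "x \<in> range rep \<Longrightarrow> f t = f x \<Longrightarrow> rep t = x"
  using rep_eq_iff by auto

lemma f_Mul_rep [simp]: "f (Mul (rep a) b) = f (Mul a b)" "f (Mul a (rep b)) = f (Mul a b)"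
  and f_Inv_rep [simp]: "f (Inv (rep a)) = f (Inv a)"
  and f_Mx_rep [simp]: "f (Mx (rep a)) = f (Mx a)"
  by (rule f_Mul f_Inv f_Mx; simp)+

lemma f_Mul_Mul_rep [simp]:
  "f (Mul (Mul (rep a) b) c) = f (Mul (Mul a b) c)" "f (Mul (Mul a (rep b)) c) = f (Mul (Mul a b) c)"
  by (rule f_Mul; simp)+

abbreviation qmul :: "'x tm \<Rightarrow> 'x tm \<Rightarrow> 'x tm" where "qmul x y \<equiv> rep (Mul x y)"
abbreviation qinv :: "'x tm \<Rightarrow> 'x tm" where "qinv x \<equiv> rep (Inv x)"
abbreviation qmx :: "'x tm \<Rightarrow> 'x tm" where "qmx x \<equiv> rep (Mx x)"
abbreviation qvar :: "'x \<Rightarrow> 'x tm" where "qvar x \<equiv> rep (Var x)"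

lemma eval_quotient: "eval_tm qmul (rep One) qinv qmx qvar t = rep t"
  by (induction t) (simp_all add: rep_eq_iff)

lemma F_inverse_monoid_quotient:
  assumes assoc: "\<And>a b c. f (Mul (Mul a b) c) = f (Mul a (Mul b c))"
    and left_unit: "\<And>a. f (Mul One a) = f a"
    and right_unit: "\<And>a. f (Mul a One) = f a"
    and mul_inv_mul: "\<And>a. f (Mul (Mul a (Inv a)) a) = f a"
    and inv_mul_inv: "\<And>a. f (Mul (Mul (Inv a) a) (Inv a)) = f (Inv a)"
    and inv_unique: "\<And>a b. f (Mul (Mul a b) a) = f a \<Longrightarrow> f (Mul (Mul b a) b) = f b \<Longrightarrow>
      f b = f (Inv a)"
    and mul_inv_idem: "\<And>a. f (Mul (Mul a (Inv a)) (Mul a (Inv a))) = f (Mul a (Inv a))"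
    and mx_sigma: "\<And>a. f (Mul (Mul a (Inv a)) a) = f (Mul (Mul a (Inv a)) (Mx a))"
    and mx_greatest: "\<And>a b e. f (Mul e a) = f (Mul e b) \<Longrightarrow>
      f b = f (Mul (Mul b (Inv b)) (Mx a))"
  shows "F_inverse_monoid (range rep) qmul (rep One) qinv qmx"
proof -
  have "inverse_monoid (range rep) qmul (rep One) qinv"
    unfolding inverse_monoid_def
  proof (intro conjI ballI impI)
    fix x y z assume "x \<in> range rep" "y \<in> range rep" "z \<in> range rep"
    show "qmul (qmul x y) z = qmul x (qmul y z)" by (simp add: rep_eq_iff assoc)
  next
    fix x y assume "x \<in> range rep" and y: "y \<in> range rep"
      and "qmul (qmul x y) x = x \<and> qmul (qmul y x) y = y"
    then have "f (qmul (qmul x y) x) = f x" "f (qmul (qmul y x) y) = f y" by simp_all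
    then have "f (Mul (Mul x y) x) = f x" "f (Mul (Mul y x) y) = f y" by simp_all
    then have "f y = f (Inv x)" by (rule inv_unique)
    with y show "y = qinv x" by (metis rep_eqI)
  next
    fix x assume x: "x \<in> range rep"
    show "qmul (rep One) x = x" "qmul x (rep One) = x" "qmul (qmul x (qinv x)) x = x"
      using x by (intro rep_eqI; simp add: left_unit right_unit mul_inv_mul)+
    show "qmul (qmul (qinv x) x) (qinv x) = qinv x"
      by (simp add: rep_eq_iff inv_mul_inv)
  qed simp_all
  moreover have "sigma_rel (range rep) qmul s (qmx s)" for s
    unfolding sigma_rel_def
    by (rule bexI[of _ "rep (Mul s (Inv s))"]) (simp_all add: rep_eq_iff mul_inv_idem mx_sigma)
  moreover have "nat_le (range rep) qmul t (qmx s)"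
    if "t \<in> range rep" and "sigma_rel (range rep) qmul s t" for s t
  proof -
    from that(2) obtain e where "qmul e s = qmul e t" unfolding sigma_rel_def by blast
    then have "f (Mul e s) = f (Mul e t)" by (simp add: rep_eq_iff)
    then have "f t = f (Mul (Mul t (Inv t)) (Mx s))" by (rule mx_greatest)
    with that(1) have "qmul (rep (Mul t (Inv t))) (qmx s) = t" by (intro rep_eqI) simp_all
    then show ?thesis unfolding nat_le_def
      by (intro bexI[of _ "rep (Mul t (Inv t))"]) (simp_all add: rep_eq_iff mul_inv_idem)
  qed
  ultimately show ?thesis unfolding F_inverse_monoid_def by blast
qed

end

section \<open>The graph model\<close>

abbreviation Rclosure :: "('x imterm \<times> 'x imterm) set \<Rightarrow> 'x graph \<Rightarrow> 'x graph" where
  "Rclosure R \<equiv> cQ_closure R R"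

definition graph_val :: "('x imterm \<times> 'x imterm) set \<Rightarrow> 'x tm \<Rightarrow> ('x vert \<Rightarrow> 'x graph) \<times> 'x vert" where
  "graph_val R t = ((\<lambda>k. if k \<in> Gverts R then Rclosure R (term_graph R k t) else bot), Gcls R t)"

lemma graph_val_eq_iff:
  "graph_val R a = graph_val R b \<longleftrightarrow>
    G_eq R a b \<and> (\<forall>k\<in>Gverts R. Rclosure R (term_graph R k a) = Rclosure R (term_graph R k b))"
  unfolding graph_val_def prod.inject fun_eq_iff Gcls_eq_iff by (metis (full_types))

lemma graph_val_eqI:
  "G_eq R a b \<Longrightarrow> (\<And>k. k \<in> Gverts R \<Longrightarrow> term_graph R k a = term_graph R k b) \<Longrightarrow>
    graph_val R a = graph_val R b"
  by (simp add: graph_val_eq_iff)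

lemma G_eq_if_gmul_Gone_eq: "gmul R (Gone R) s = gmul R (Gone R) t \<Longrightarrow> G_eq R s t"
  by (rule G_eq_if_gmul_eq[OF Gone_in_Gverts])

lemma gmul_Mul_Inv [simp]: "g \<in> Gverts R \<Longrightarrow> gmul R g (Mul t (Inv t)) = g"
  and gmul_Inv_Mul [simp]: "g \<in> Gverts R \<Longrightarrow> gmul R g (Mul (Inv t) t) = g"
  by (simp_all flip: gmul_gmul)

lemma vertices_le: "V \<subseteq> fst D \<Longrightarrow> (V, {}) \<le> D"
  by (simp add: less_eq_prod_def)

lemma Rclosure_term_graph_Mul:
  assumes "k \<in> Gverts R"
  shows "Rclosure R (term_graph R k (Mul a b)) =
    Rclosure R (sup (Rclosure R (term_graph R k a)) (Rclosure R (term_graph R (gmul R k a) b)))"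
  using assms by (simp add: closure_sup_closure[OF R_subset_G_kernel] term_graph_le_Cayley_graph)

lemma graph_val_Mul:
  assumes "graph_val R a = graph_val R a'" and "graph_val R b = graph_val R b'"
  shows "graph_val R (Mul a b) = graph_val R (Mul a' b')"
proof -
  have a: "G_eq R a a'" "\<forall>k\<in>Gverts R. Rclosure R (term_graph R k a) = Rclosure R (term_graph R k a')"
    and b: "G_eq R b b'" "\<forall>k\<in>Gverts R. Rclosure R (term_graph R k b) = Rclosure R (term_graph R k b')"
    using assms by (simp_all add: graph_val_eq_iff)
  have "Rclosure R (term_graph R k (Mul a b)) = Rclosure R (term_graph R k (Mul a' b'))"
    if k: "k \<in> Gverts R" for k
  proof -
    have "Rclosure R (term_graph R k (Mul a b)) =
        Rclosure R (sup (Rclosure R (term_graph R k a)) (Rclosure R (term_graph R (gmul R k a) b)))"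
      by (rule Rclosure_term_graph_Mul[OF k])
    also have "\<dots> =
        Rclosure R (sup (Rclosure R (term_graph R k a')) (Rclosure R (term_graph R (gmul R k a') b')))"
      using a b k gmul_cong[OF k a(1)] by simp
    also have "\<dots> = Rclosure R (term_graph R k (Mul a' b'))"
      by (rule Rclosure_term_graph_Mul[OF k, symmetric])
    finally show ?thesis .
  qed
  then show ?thesis
    using a b by (simp add: graph_val_eq_iff G_eq_Mul)
qed

lemma graph_val_Inv:
  assumes "graph_val R a = graph_val R a'"
  shows "graph_val R (Inv a) = graph_val R (Inv a')"
proof -
  have a: "G_eq R a a'" "\<forall>k\<in>Gverts R. Rclosure R (term_graph R k a) = Rclosure R (term_graph R k a')"
    using assms by (simp_all add: graph_val_eq_iff)
  have "gmul R k (Inv a) = gmul R k (Inv a')" if "k \<in> Gverts R" for k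
    using gmul_cong[OF that G_eq_Inv[OF a(1)]] .
  then show ?thesis
    using a G_eq_Inv[OF a(1)] by (simp add: graph_val_eq_iff)
qed

lemma graph_val_Mx:
  assumes "graph_val R a = graph_val R a'"
  shows "graph_val R (Mx a) = graph_val R (Mx a')"
proof -
  have a: "G_eq R a a'" using assms by (simp add: graph_val_eq_iff)
  then have "G_eq R (Mx a) (Mx a')" by (meson G_eq_Mx G_eq_sym G_eq_trans)
  with a show ?thesis by (intro graph_val_eqI) (simp_all add: gmul_cong)
qed

lemma term_congruence_graph_val: "term_congruence (graph_val R)"
  by unfold_locales (erule graph_val_Mul graph_val_Inv graph_val_Mx; assumption)+

lemma graph_val_assoc: "graph_val R (Mul (Mul a b) c) = graph_val R (Mul a (Mul b c))"
  by (rule graph_val_eqI) (simp_all add: G_eq_assoc gmul_gmul sup_assoc)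

lemma graph_val_left_unit: "graph_val R (Mul One a) = graph_val R a"
  by (rule graph_val_eqI) (simp_all add: G_eq_left_unit sup_absorb2 vertices_le)

lemma graph_val_right_unit: "graph_val R (Mul a One) = graph_val R a"
  by (rule graph_val_eqI) (simp_all add: G_eq_right_unit sup_absorb1 vertices_le)

lemma graph_val_mul_inv_mul: "graph_val R (Mul (Mul a (Inv a)) a) = graph_val R a"
  by (rule graph_val_eqI) (auto intro: G_eq_if_gmul_Gone_eq simp flip: gmul_gmul)

lemma graph_val_inv_mul_inv: "graph_val R (Mul (Mul (Inv a) a) (Inv a)) = graph_val R (Inv a)"
  by (rule graph_val_eqI) (auto intro: G_eq_if_gmul_Gone_eq simp flip: gmul_gmul)

lemma graph_val_mul_inv_idem:
  "graph_val R (Mul (Mul a (Inv a)) (Mul a (Inv a))) = graph_val R (Mul a (Inv a))"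
  by (rule graph_val_eqI) (auto intro: G_eq_if_gmul_Gone_eq simp flip: gmul_gmul)

lemma graph_val_mx_sigma:
  "graph_val R (Mul (Mul a (Inv a)) a) = graph_val R (Mul (Mul a (Inv a)) (Mx a))"
  by (rule graph_val_eqI)
    (auto intro: G_eq_if_gmul_Gone_eq simp: sup_absorb1 vertices_le simp flip: gmul_gmul)

lemma graph_val_mx_greatest:
  assumes "graph_val R (Mul e a) = graph_val R (Mul e b)"
  shows "graph_val R b = graph_val R (Mul (Mul b (Inv b)) (Mx a))"
proof -
  have "gmul R (Gcls R e) a = gmul R (Gcls R e) b"
    using assms by (simp add: graph_val_eq_iff gmul_Gcls Gcls_eq_iff)
  then have ab: "G_eq R a b" by (rule G_eq_if_gmul_eq[OF Gcls_in_Gverts])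
  then have "gmul R k a = gmul R k b" if "k \<in> Gverts R" for k
    using gmul_cong that by blast
  moreover have "G_eq R b (Mul (Mul b (Inv b)) (Mx a))"
  proof (rule G_eq_if_gmul_Gone_eq)
    have "gmul R (Gone R) (Mul (Mul b (Inv b)) (Mx a)) = gmul R (Gone R) a"
      by (simp flip: gmul_gmul)
    also have "\<dots> = gmul R (Gone R) b" using ab by (simp add: gmul_cong)
    finally show "gmul R (Gone R) b = gmul R (Gone R) (Mul (Mul b (Inv b)) (Mx a))" by simp
  qed
  ultimately show ?thesis
    by (intro graph_val_eqI) (simp_all add: sup_absorb1 vertices_le)
qed

text \<open>The graph of \<open>x y x\<close> contains a translate of the graph of \<open>y\<close> and vice versa, so the
  closures of the graphs of \<open>y\<close> and of \<open>x\<^sup>-\<^sup>1\<close> contain each other.\<close>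
lemma graph_val_inv_unique:
  assumes xyx: "graph_val R (Mul (Mul x y) x) = graph_val R x"
    and yxy: "graph_val R (Mul (Mul y x) y) = graph_val R y"
  shows "graph_val R y = graph_val R (Inv x)"
proof -
  have "gmul R (gmul R (gmul R k x) y) x = gmul R k x" if "k \<in> Gverts R" for k
    using xyx gmul_cong[OF that] that by (simp add: graph_val_eq_iff gmul_gmul)
  then have "gmul R (gmul R k x) y = k" if "k \<in> Gverts R" for k
    using that by (metis gmul_gmul_Inv gmul_in_Gverts)
  from this[of "gmul R (Gone R) (Inv x)"] have y_inv: "G_eq R y (Inv x)"
    by (intro G_eq_if_gmul_Gone_eq) simp
  have in_closure: "term_graph R (gmul R j s) t \<le> Rclosure R (term_graph R j s)"
    if "graph_val R (Mul (Mul s t) s) = graph_val R s" "j \<in> Gverts R" for s t j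
  proof -
    have "term_graph R (gmul R j s) t \<le> term_graph R j (Mul (Mul s t) s)" by (simp add: le_supI1)
    also have "\<dots> \<le> Rclosure R (term_graph R j (Mul (Mul s t) s))" by (rule closure_upper)
    finally show ?thesis using that by (simp add: graph_val_eq_iff)
  qed
  show ?thesis
    unfolding graph_val_eq_iff
  proof (intro conjI ballI y_inv)
    fix k assume k: "k \<in> Gverts R"
    define k' where "k' = gmul R k (Inv x)"
    have k': "k' \<in> Gverts R" "gmul R k' x = k" "gmul R k y = k'"
      using k gmul_cong[OF k y_inv] by (simp_all add: k'_def)
    have "Rclosure R (term_graph R k y) = Rclosure R (term_graph R k' x)"
      using in_closure[OF xyx k'(1)] in_closure[OF yxy k] k k'
      by (intro closure_eqI[OF R_subset_G_kernel]) (simp_all add: term_graph_le_Cayley_graph)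
    then show "Rclosure R (term_graph R k y) = Rclosure R (term_graph R k (Inv x))"
      by (simp add: k'_def)
  qed
qed

lemma Rclosure_jsub_R:
  assumes uv: "(u, v) \<in> R" and k: "k \<in> Gverts R"
  shows "Rclosure R (jsub R k u) = Rclosure R (jsub R k v)"
proof -
  have "jsub R k x \<le> Rclosure R (jsub R k y)" if "x = u \<and> y = v \<or> x = v \<and> y = u" for x y
  proof -
    let ?X = "Rclosure R (jsub R k y)"
    have "cQ_closed R R ?X"
      using k by (simp add: closure_closed R_subset_G_kernel jsub_le_Cayley_graph)
    moreover have "jsub R k y \<le> ?X" by (rule closure_upper)
    moreover have "k \<in> fst ?X"
      using start_in_jsub[OF k, of y] closure_upper[of "jsub R k y" R R] by (auto simp: less_eq_prod_def)
    ultimately show ?thesis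
      using that closed_journey_iff[OF _ R_subset_G_kernel uv] by blast
  qed
  then show ?thesis
    using k by (simp add: closure_eqI R_subset_G_kernel jsub_le_Cayley_graph)
qed

lemma graph_val_satisfies_R:
  "(u, v) \<in> R \<Longrightarrow> graph_val R (imterm_tm u) = graph_val R (imterm_tm v)"
  using R_subset_G_kernel
  by (auto simp: graph_val_eq_iff term_graph_imterm Rclosure_jsub_R G_kernel_def)

lemma graph_val_eq_if_S_eq:
  assumes "S_eq R a b"
  shows "graph_val R a = graph_val R b"
proof -
  interpret term_congruence "graph_val R" by (rule term_congruence_graph_val)
  have F: "F_inverse_monoid (range rep) qmul (rep One) qinv qmx"
    using graph_val_assoc graph_val_left_unit graph_val_right_unit graph_val_mul_inv_mul
      graph_val_inv_mul_inv graph_val_inv_unique graph_val_mul_inv_idem graph_val_mx_sigma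
      graph_val_mx_greatest
    by (rule F_inverse_monoid_quotient)
  have "R_model R (range rep) qmul (rep One) qinv qmx qvar"
  proof unfold_locales
    show "inverse_monoid (range rep) qmul (rep One) qinv"
      using F by (simp add: F_inverse_monoid_def)
  qed (simp_all add: F image_subset_iff eval_quotient rep_eq_iff graph_val_satisfies_R)
  from R_model.ev_eq_if_S_eq[OF this assms] show ?thesis
    by (simp add: eval_quotient rep_eq_iff)
qed

lemma closed_R_iff_closed_SQ: "cQ_closed R R X \<longleftrightarrow> cQ_closed R (SQ R) X"
proof
  assume X: "cQ_closed R R X"
  have journeys: "jsub R g u \<le> X \<longleftrightarrow> jsub R g v \<le> X"
    if "(u, v) \<in> SQ R" and "g \<in> fst X" for u v g
  proof -
    have g: "g \<in> Gverts R" using X that(2) unfolding cQ_closed_def subgraph_def by blast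
    have "Rclosure R (jsub R g u) = Rclosure R (jsub R g v)"
      using graph_val_eq_if_S_eq[of R "imterm_tm u" "imterm_tm v"] that(1) g
      by (simp add: SQ_def graph_val_eq_iff term_graph_imterm)
    then show ?thesis using closure_le_iff[OF X] by metis
  qed
  have "subgraph R X" using X by (simp add: cQ_closed_def)
  with journeys show "cQ_closed R (SQ R) X"
    by (auto simp: cQ_closed_iff[OF SQ_subset_G_kernel])
next
  assume X: "cQ_closed R (SQ R) X"
  have journeys: "jsub R g u \<le> X \<longleftrightarrow> jsub R g v \<le> X" if "(u, v) \<in> R" and "g \<in> fst X" for u v g
    using closed_journey_iff[OF X SQ_subset_G_kernel] R_subset_SQ that by blast
  have "subgraph R X" using X by (simp add: cQ_closed_def)
  with journeys show "cQ_closed R R X"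
    by (auto simp: cQ_closed_iff[OF R_subset_G_kernel])
qed

lemma FGamma_eq_Rclosure: "FGamma R w = Rclosure R (jsub R (Gone R) w)"
  unfolding FGamma_def by (rule closure_cong) (simp add: closed_R_iff_closed_SQ)

section \<open>Iterated \<open>P\<close>-expansions\<close>

lemma P_expansion_eq:
  fixes R :: "('x imterm \<times> 'x imterm) set"
  shows "P_expansion R D =
    sup D (Sup {jsub R g v | g u v. (u, v) \<in> R \<and> g \<in> fst D \<and> jsub R g u \<le> D})"
proof -
  let ?S = "{jsub R g v | g u v. (u, v) \<in> R \<and> g \<in> fst D \<and> sub_le (jsub R g u) D}"
  have "{fst (jsub R g v) | g u v. (u, v) \<in> R \<and> g \<in> fst D \<and> sub_le (jsub R g u) D} = fst ` ?S"
    "{snd (jsub R g v) | g u v. (u, v) \<in> R \<and> g \<in> fst D \<and> sub_le (jsub R g u) D} = snd ` ?S"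
    by blast+
  then show ?thesis
    unfolding P_expansion_def sup_prod_def Sup_prod_def by simp
qed

lemma le_P_expansion: "D \<le> P_expansion R D"
  by (simp add: P_expansion_eq)

lemma jsub_le_P_expansion:
  "(u, v) \<in> R \<Longrightarrow> g \<in> fst D \<Longrightarrow> jsub R g u \<le> D \<Longrightarrow> jsub R g v \<le> P_expansion R D"
  unfolding P_expansion_eq by (rule le_supI2, rule Sup_upper) blast

lemma subgraph_P_expansion:
  assumes "subgraph R D"
  shows "subgraph R (P_expansion R D)"
proof -
  have "subgraph R (jsub R g v)" if "g \<in> fst D" for g v
  proof (rule subgraph_jsub)
    show "g \<in> Gverts R" using that assms by (auto simp: subgraph_def)
  qed
  then show ?thesis
    unfolding P_expansion_eq using assms by (auto intro!: subgraph_sup subgraph_Sup)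
qed

lemma P_expansion_le_closed:
  assumes X: "cQ_closed R R X" and "D \<le> X"
  shows "P_expansion R D \<le> X"
proof -
  have "jsub R g v \<le> X" if "(u, v) \<in> R" "g \<in> fst D" "jsub R g u \<le> D" for g u v
  proof -
    have "g \<in> fst X" using that(2) \<open>D \<le> X\<close> by (auto simp: less_eq_prod_def)
    moreover have "jsub R g u \<le> X" using that(3) \<open>D \<le> X\<close> by (rule order.trans)
    ultimately show ?thesis
      using closed_journey_iff[OF X R_subset_G_kernel that(1)] by blast
  qed
  then show ?thesis
    unfolding P_expansion_eq using \<open>D \<le> X\<close> by (auto intro!: Sup_least)
qed

lemma Delta_0 [simp]: "Delta R w 0 = jsub R (Gone R) w"
  by (simp add: Delta_def)

lemma Delta_Suc [simp]: "Delta R w (Suc i) = P_expansion R (Delta R w i)"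
  by (simp add: Delta_def)

lemma mono_Delta: "mono (Delta R w)"
  by (simp add: mono_iff_le_Suc le_P_expansion)

lemma subgraph_Delta: "subgraph R (Delta R w i)"
  by (induction i) (simp_all add: subgraph_jsub subgraph_P_expansion)

lemma Delta_le_closed: "cQ_closed R R X \<Longrightarrow> jsub R (Gone R) w \<le> X \<Longrightarrow> Delta R w i \<le> X"
  by (induction i) (simp_all add: P_expansion_le_closed)

lemma finite_subset_UN_mono:
  fixes F :: "nat \<Rightarrow> 'a set"
  assumes "finite A" and "A \<subseteq> (\<Union>i. F i)" and "mono F"
  obtains i where "A \<subseteq> F i"
proof -
  have "F i \<subseteq> F j \<or> F j \<subseteq> F i" for i j
    using assms(3) by (metis monoD nat_le_linear)
  then have "subset.chain UNIV (range F)"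
    unfolding subset.chain_def by blast
  with assms(1,2) show ?thesis
    using finite_subset_Union_chain[of A "range F" UNIV] that by auto
qed

lemma finite_graph_le_SUP_mono:
  fixes F :: "nat \<Rightarrow> 'a set \<times> 'b set"
  assumes "finite (fst A)" and "finite (snd A)" and "mono F" and "A \<le> (SUP i. F i)"
  obtains i where "A \<le> F i"
proof -
  have "mono (\<lambda>i. fst (F i))" "mono (\<lambda>i. snd (F i))"
    using \<open>mono F\<close> by (auto simp: mono_def less_eq_prod_def)
  moreover have "fst A \<subseteq> (\<Union>i. fst (F i))" "snd A \<subseteq> (\<Union>i. snd (F i))"
    using \<open>A \<le> (SUP i. F i)\<close> by (auto simp: less_eq_prod_def fst_SUP snd_SUP)
  ultimately obtain i j where "fst A \<subseteq> fst (F i)" "snd A \<subseteq> snd (F j)"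
    using finite_subset_UN_mono assms(1,2) by metis
  moreover have "fst (F i) \<subseteq> fst (F (max i j))" "snd (F j) \<subseteq> snd (F (max i j))"
    using \<open>mono F\<close> by (simp_all add: monoD fst_mono snd_mono)
  ultimately have "A \<le> F (max i j)"
    unfolding less_eq_prod_def by blast
  then show ?thesis by (rule that)
qed

lemma closed_SUP_Delta:
  assumes "sym R"
  shows "cQ_closed R R (SUP i. Delta R w i)"
proof -
  let ?U = "SUP i. Delta R w i"
  have transfer: "jsub R g v \<le> ?U"
    if uv: "(u, v) \<in> R" and g: "g \<in> fst ?U" and u_le: "jsub R g u \<le> ?U" for u v g
  proof -
    obtain i where i: "g \<in> fst (Delta R w i)" using g by (auto simp: fst_SUP)
    obtain j where j: "jsub R g u \<le> Delta R w j"
      using finite_graph_le_SUP_mono finite_jsub mono_Delta u_le by metis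
    let ?k = "max i j"
    have "Delta R w i \<le> Delta R w ?k" "Delta R w j \<le> Delta R w ?k"
      by (simp_all add: monoD[OF mono_Delta])
    with i j have "g \<in> fst (Delta R w ?k)" "jsub R g u \<le> Delta R w ?k"
      by (meson fst_mono subsetD, meson order.trans)
    then have "jsub R g v \<le> Delta R w (Suc ?k)"
      using uv by (simp add: jsub_le_P_expansion)
    then show ?thesis by (meson SUP_upper UNIV_I order.trans)
  qed
  have journeys: "jsub R g u \<le> ?U \<longleftrightarrow> jsub R g v \<le> ?U" if "(u, v) \<in> R" "g \<in> fst ?U" for u v g
    using transfer[OF that] transfer[OF symD[OF assms that(1)] that(2)] by blast
  have "subgraph R ?U" by (auto intro: subgraph_Sup subgraph_Delta)
  with journeys show ?thesis
    by (auto simp: cQ_closed_iff[OF R_subset_G_kernel])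
qed

lemma SUP_Delta_eq_Rclosure:
  assumes "sym R"
  shows "(SUP i. Delta R w i) = Rclosure R (jsub R (Gone R) w)"
proof (rule antisym)
  have "cQ_closed R R (Rclosure R (jsub R (Gone R) w))"
    by (simp add: closure_closed R_subset_G_kernel jsub_le_Cayley_graph)
  then show "(SUP i. Delta R w i) \<le> Rclosure R (jsub R (Gone R) w)"
    by (intro SUP_least Delta_le_closed closure_upper)
  show "Rclosure R (jsub R (Gone R) w) \<le> (SUP i. Delta R w i)"
    using closed_SUP_Delta[OF assms] SUP_upper[of 0 UNIV "Delta R w"]
    by (intro closure_least) simp_all
qed

theorem mainTheorem11:
  fixes R :: "('x imterm \<times> 'x imterm) set" and w :: "'x imterm"
  assumes "sym R"
  shows "FGamma R w = cQ_closure R R (jsub R (Gone R) w) \<and>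
         FGamma R w = ((\<Union>i. fst (Delta R w i)), (\<Union>i. snd (Delta R w i)))"
proof
  show "FGamma R w = cQ_closure R R (jsub R (Gone R) w)" by (rule FGamma_eq_Rclosure)
  also have "\<dots> = (SUP i. Delta R w i)" by (rule SUP_Delta_eq_Rclosure[OF assms, symmetric])
  also have "\<dots> = ((\<Union>i. fst (Delta R w i)), (\<Union>i. snd (Delta R w i)))"
    by (simp add: SUP_prod_alt_def comp_def)
  finally show "FGamma R w = ((\<Union>i. fst (Delta R w i)), (\<Union>i. snd (Delta R w i)))" .
qed

end
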